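(* Let $A$ be a complete filtered associative algebra over a field $\mathbb{K}$ of characteristic zero, and let $P:A\to A$ be a linear map preserving the filtration which is moreover an idempotent algebra homomorphism. Let $\chi:A_1\to A_1$ be the BCH-recursion map associated to $P$. Then for every $u\in A_1$, $$\chi(u)=u+\mathrm{BCH}\big(-P(u),u\big).$$
   Context: A complete filtered associative algebra is an associative algebra $A$ with a decreasing filtration $A=A_0\supseteq A_1\supseteq\cdots$ by subalgebras with $A_mA_n\subseteq A_{m+n}$ and $A\cong\varprojlim A/A_n$. $\mathrm{BCH}(x,y)$ is the Baker--Campbell--Hausdorff series defined by $\exp(x)\exp(y)=\exp(x+y+\mathrm{BCH}(x,y))$. With $\tilde P:=\mathrm{id}_A-P$, the BCH-recursion map associated to $P$ is the unique map $\chi:A_1\to A_1$ satisfying $\chi(a)=a-\mathrm{BCH}\big(P(\chi(a)),\tilde P(\chi(a))\big)$ for all $a\in A_1$ (the limit of the iteration $\chi_{(0)}(a)=a$, $\chi_{(n+1)}(a)=a-\mathrm{BCH}(P(\chi_{(n)}(a)),\tilde P(\chi_{(n)}(a)))$ in the filtration topology). *)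

theory Defs
  imports Main
begin

text \<open>A (possibly non-unital) associative algebra over a field 'k of characteristic zero
  is modelled by a type 'a of class ring together with a scalar action sc.\<close>

definition assoc_algebra :: "('k::field_char_0 \<Rightarrow> 'a::ring \<Rightarrow> 'a) \<Rightarrow> bool" where
  "assoc_algebra sc \<longleftrightarrow>
     (\<forall>a x y. sc a (x + y) = sc a x + sc a y) \<and>
     (\<forall>a b x. sc (a + b) x = sc a x + sc b x) \<and>
     (\<forall>a b x. sc (a * b) x = sc a (sc b x)) \<and>
     (\<forall>x. sc 1 x = x) \<and>
     (\<forall>a x y. sc a (x * y) = sc a x * y) \<and>
     (\<forall>a x y. sc a (x * y) = x * sc a y)"

definition filtration :: "('k::field_char_0 \<Rightarrow> 'a::ring \<Rightarrow> 'a) \<Rightarrow> (nat \<Rightarrow> 'a set) \<Rightarrow> bool" where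
  "filtration sc F \<longleftrightarrow>
     F 0 = UNIV \<and>
     (\<forall>n. F (Suc n) \<subseteq> F n) \<and>
     (\<forall>n. 0 \<in> F n \<and> (\<forall>x\<in>F n. \<forall>y\<in>F n. x + y \<in> F n) \<and> (\<forall>a. \<forall>x\<in>F n. sc a x \<in> F n)) \<and>
     (\<forall>m n. \<forall>x\<in>F m. \<forall>y\<in>F n. x * y \<in> F (m + n))"

text \<open>Completeness: the canonical map A -> lim A/A_n is bijective.
  Injectivity: the intersection of the A_n is zero.
  Surjectivity: every compatible family of residues x_n mod A_n comes from an element.\<close>
definition complete_filtration :: "(nat \<Rightarrow> 'a::ring set) \<Rightarrow> bool" where
  "complete_filtration F \<longleftrightarrow>
     (\<Inter>n. F n) = {0} \<and>
     (\<forall>x. (\<forall>n. x (Suc n) - x n \<in> F n) \<longrightarrow> (\<exists>y. \<forall>n. y - x n \<in> F n))"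

definition complete_filtered_algebra ::
  "('k::field_char_0 \<Rightarrow> 'a::ring \<Rightarrow> 'a) \<Rightarrow> (nat \<Rightarrow> 'a set) \<Rightarrow> bool" where
  "complete_filtered_algebra sc F \<longleftrightarrow>
     assoc_algebra sc \<and> filtration sc F \<and> complete_filtration F"

definition filt_lim :: "(nat \<Rightarrow> 'a::ring set) \<Rightarrow> (nat \<Rightarrow> 'a) \<Rightarrow> 'a \<Rightarrow> bool" where
  "filt_lim F s y \<longleftrightarrow> (\<forall>k. \<exists>N. \<forall>n\<ge>N. s n - y \<in> F k)"

definition fsum :: "(nat \<Rightarrow> 'a::ring set) \<Rightarrow> (nat \<Rightarrow> 'a) \<Rightarrow> 'a" where
  "fsum F f = (THE y. filt_lim F (\<lambda>n. \<Sum>i<n. f i) y)"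

fun npow :: "nat \<Rightarrow> 'a::ring \<Rightarrow> 'a" where
  "npow 0 z = 0"
| "npow (Suc 0) z = z"
| "npow (Suc (Suc n)) z = z * npow (Suc n) z"

definition mon :: "nat \<Rightarrow> nat \<Rightarrow> 'a::ring \<Rightarrow> 'a \<Rightarrow> 'a" where
  "mon p q x y = (if p = 0 then npow q y else if q = 0 then npow p x else npow p x * npow q y)"

text \<open>exp(x) exp(y) - 1 = sum over (p,q) /= (0,0) of x^p y^q / (p! q!), grouped by total degree.\<close>
definition exp_prod_m1 ::
  "('k::field_char_0 \<Rightarrow> 'a::ring \<Rightarrow> 'a) \<Rightarrow> (nat \<Rightarrow> 'a set) \<Rightarrow> 'a \<Rightarrow> 'a \<Rightarrow> 'a" where
  "exp_prod_m1 sc F x y = fsum F (\<lambda>n. if n = 0 then 0 else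
      (\<Sum>p\<le>n. sc (1 / (of_nat (fact p) * of_nat (fact (n - p)))) (mon p (n - p) x y)))"

definition log1p ::
  "('k::field_char_0 \<Rightarrow> 'a::ring \<Rightarrow> 'a) \<Rightarrow> (nat \<Rightarrow> 'a set) \<Rightarrow> 'a \<Rightarrow> 'a" where
  "log1p sc F z = fsum F (\<lambda>k. if k = 0 then 0 else sc ((-1) ^ (k + 1) / of_nat k) (npow k z))"

text \<open>BCH(x,y) defined by exp(x) exp(y) = exp(x + y + BCH(x,y)), i.e.
  BCH(x,y) = log(exp(x) exp(y)) - x - y (for x, y in A_1).\<close>
definition BCH ::
  "('k::field_char_0 \<Rightarrow> 'a::ring \<Rightarrow> 'a) \<Rightarrow> (nat \<Rightarrow> 'a set) \<Rightarrow> 'a \<Rightarrow> 'a \<Rightarrow> 'a" where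
  "BCH sc F x y = log1p sc F (exp_prod_m1 sc F x y) - x - y"

end

theory Submission
  imports Defs "HOL-Computational_Algebra.Formal_Power_Series"
begin

text \<open>Write c = chi u, p = P c and q = c - p, so that P p = p and P q = 0. Without a unit,
  exp x - 1 and log (1 + z) are evaluations of the formal power series exp X - 1 and
  log (1 + X) at elements of A_1, and (1 + a)(1 + b) - 1 is the circle product a + b + ab;
  evaluation is a continuous homomorphism compatible with composition, so all identities
  between these operations are inherited from 'k[[X]]. The recursion for chi says
  exp u = exp p exp q. A continuous algebra endomorphism commutes with exp, so applying P
  gives exp (P u) = exp p exp 0 = exp p, hence P u = p. Therefore exp (-P u) exp u = exp q,
  that is u + BCH(-P u, u) = q + p = chi u.\<close>

definition circ_mult :: "'a::ring \<Rightarrow> 'a \<Rightarrow> 'a" where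
  "circ_mult a b = a + b + a * b"

lemma circ_mult_assoc: "circ_mult (circ_mult a b) c = circ_mult a (circ_mult b c)"
  by (simp add: circ_mult_def algebra_simps)

lemma circ_mult_0_left [simp]: "circ_mult 0 a = a"
  and circ_mult_0_right [simp]: "circ_mult a 0 = a"
  by (simp_all add: circ_mult_def)

lemma circ_mult_fps_exp_neg:
  "circ_mult (fps_exp (-1) - 1) (fps_exp 1 - 1 :: 'k::field_char_0 fps) = 0"
proof -
  have "circ_mult (fps_exp (-1) - 1) (fps_exp 1 - 1 :: 'k fps) = fps_exp (-1) * fps_exp 1 - 1"
    by (simp add: circ_mult_def algebra_simps)
  also have "\<dots> = 0"
    by (simp flip: fps_exp_add_mult)
  finally show ?thesis .
qed

lemma npow_Suc: "n \<ge> 1 \<Longrightarrow> npow (Suc n) x = x * npow n x"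
  by (cases n) auto

lemma npow_add: "m \<ge> 1 \<Longrightarrow> n \<ge> 1 \<Longrightarrow> npow (m + n) x = npow m x * npow n x"
proof (induction m rule: nat_induct_at_least)
  case base
  then show ?case by (simp add: npow_Suc)
next
  case (Suc m)
  then show ?case by (simp add: npow_Suc mult.assoc)
qed

lemma npow_0_right [simp]: "npow n (0::'a::ring) = 0"
proof (induction n)
  case (Suc n)
  then show ?case by (cases n) auto
qed simp

lemma npow_hom:
  assumes "\<And>x y. h (x * y) = h x * h y" and "h 0 = 0"
  shows "h (npow n x) = npow n (h x)"
  by (induction n x rule: npow.induct) (simp_all add: assms)

lemma fps_compose_eq_truncated_sum:
  fixes f g :: "'k::comm_ring_1 fps"
  assumes "fps_nth g 0 = 0" and "j < N"
  shows "fps_nth (\<Sum>i<N. fps_const (fps_nth f i) * g ^ i) j = fps_nth (f oo g) j"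
proof -
  have "fps_nth (\<Sum>i<N. fps_const (fps_nth f i) * g ^ i) j = (\<Sum>i<N. fps_nth f i * fps_nth (g ^ i) j)"
    by (simp add: fps_sum_nth)
  also have "\<dots> = (\<Sum>i\<in>{0..j}. fps_nth f i * fps_nth (g ^ i) j)"
    using assms startsby_zero_power_prefix[OF assms(1)]
    by (intro sum.mono_neutral_right) auto
  also have "\<dots> = fps_nth (f oo g) j"
    by (simp add: fps_compose_nth)
  finally show ?thesis .
qed

lemma sum_lessThan_diff:
  fixes f :: "nat \<Rightarrow> 'a::ab_group_add"
  assumes "m \<le> n"
  shows "(\<Sum>i<n. f i) - (\<Sum>i<m. f i) = (\<Sum>i\<in>{m..<n}. f i)"
  using sum_diff_nat_ivl[of 0 m n f] assms by (simp add: atLeast0LessThan)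

locale filtered_alg =
  fixes sc :: "'k::field_char_0 \<Rightarrow> 'a::ring \<Rightarrow> 'a" and F :: "nat \<Rightarrow> 'a set"
  assumes complete_filtered: "complete_filtered_algebra sc F"
begin

lemma
  shows sc_add: "sc a (x + y) = sc a x + sc a y"
    and sc_add_left: "sc (a + b) x = sc a x + sc b x"
    and sc_sc: "sc a (sc b x) = sc (a * b) x"
    and sc_one: "sc 1 x = x"
    and sc_mult_left: "sc a (x * y) = sc a x * y"
    and sc_mult_right: "sc a (x * y) = x * sc a y"
  using complete_filtered
  unfolding complete_filtered_algebra_def assoc_algebra_def by (elim conjE; simp)+

sublocale module sc
  by unfold_locales (simp_all add: sc_add sc_add_left sc_sc sc_one)

lemma sc_mult_sc: "sc a x * sc b y = sc (a * b) (x * y)"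
  by (simp add: mult.commute flip: sc_mult_left sc_mult_right)

lemma additive_sc: "additive (sc a)"
  by unfold_locales (rule sc_add)

lemma
  shows F_0: "F 0 = UNIV"
    and F_Suc: "F (Suc n) \<subseteq> F n"
    and F_zero [simp]: "0 \<in> F n"
    and F_add: "x \<in> F n \<Longrightarrow> y \<in> F n \<Longrightarrow> x + y \<in> F n"
    and F_sc: "x \<in> F n \<Longrightarrow> sc a x \<in> F n"
    and F_mult: "x \<in> F m \<Longrightarrow> y \<in> F n \<Longrightarrow> x * y \<in> F (m + n)"
  using complete_filtered unfolding complete_filtered_algebra_def filtration_def by blast+

lemma F_antimono: "m \<le> n \<Longrightarrow> x \<in> F n \<Longrightarrow> x \<in> F m"
  using lift_Suc_antimono_le[of F, OF F_Suc] by blast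

lemma F_uminus: "x \<in> F n \<Longrightarrow> - x \<in> F n"
  using F_sc[of x n "-1"] by simp

lemma F_diff: "x \<in> F n \<Longrightarrow> y \<in> F n \<Longrightarrow> x - y \<in> F n"
  using F_add[OF _ F_uminus] by (simp only: diff_conv_add_uminus)

lemma F_sum: "(\<And>i. i \<in> A \<Longrightarrow> f i \<in> F n) \<Longrightarrow> sum f A \<in> F n"
  by (induction A rule: infinite_finite_induct) (auto intro: F_add)

lemma F_mult_left: "x \<in> F n \<Longrightarrow> x * y \<in> F n"
  using F_mult[of x n y 0] by (simp add: F_0)

lemma F_mult_right: "y \<in> F n \<Longrightarrow> x * y \<in> F n"
  using F_mult[of x 0 y n] by (simp add: F_0)

lemma circ_mult_in_F: "x \<in> F n \<Longrightarrow> y \<in> F n \<Longrightarrow> circ_mult x y \<in> F n"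
  unfolding circ_mult_def by (intro F_add F_mult_left)

lemma
  shows F_separated: "(\<And>n. x \<in> F n) \<Longrightarrow> x = 0"
    and F_complete: "(\<And>n. s (Suc n) - s n \<in> F n) \<Longrightarrow> \<exists>y. \<forall>n. y - s n \<in> F n"
  using complete_filtered unfolding complete_filtered_algebra_def complete_filtration_def
  by blast+

lemma filt_lim_unique:
  assumes y: "filt_lim F s y" and z: "filt_lim F s z"
  shows "y = z"
proof -
  have "y - z \<in> F k" for k
  proof -
    obtain N1 where N1: "\<forall>n\<ge>N1. s n - y \<in> F k" using y unfolding filt_lim_def by blast
    obtain N2 where N2: "\<forall>n\<ge>N2. s n - z \<in> F k" using z unfolding filt_lim_def by blast
    have "(s (max N1 N2) - z) - (s (max N1 N2) - y) \<in> F k"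
      by (rule F_diff) (use N1 N2 in auto)
    then show ?thesis by simp
  qed
  then show ?thesis using F_separated[of "y - z"] by simp
qed

lemma fsum_eqI: "filt_lim F (\<lambda>n. \<Sum>i<n. f i) y \<Longrightarrow> fsum F f = y"
  unfolding fsum_def using filt_lim_unique by blast

lemma filt_lim_add:
  assumes "filt_lim F s y" and "filt_lim F t z"
  shows "filt_lim F (\<lambda>n. s n + t n) (y + z)"
  unfolding filt_lim_def
proof
  fix k
  obtain N1 where N1: "\<forall>n\<ge>N1. s n - y \<in> F k" using assms(1) unfolding filt_lim_def by blast
  obtain N2 where N2: "\<forall>n\<ge>N2. t n - z \<in> F k" using assms(2) unfolding filt_lim_def by blast
  have "s n + t n - (y + z) \<in> F k" if "n \<ge> max N1 N2" for n
    using F_add[of "s n - y" k "t n - z"] N1 N2 that by (simp add: algebra_simps)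
  then show "\<exists>N. \<forall>n\<ge>N. s n + t n - (y + z) \<in> F k" by blast
qed

lemma filt_lim_hom:
  assumes "additive h" and "\<And>n x. x \<in> F n \<Longrightarrow> h x \<in> F n" and "filt_lim F s y"
  shows "filt_lim F (\<lambda>n. h (s n)) (h y)"
  using assms unfolding filt_lim_def by (metis additive.diff)

lemma filt_lim_zeroI: "(\<And>n. f n \<in> F n) \<Longrightarrow> filt_lim F f 0"
  unfolding filt_lim_def by (metis F_antimono diff_zero)

lemma summable_if_filt_lim_zero:
  assumes "filt_lim F f 0"
  shows "\<exists>y. filt_lim F (\<lambda>n. \<Sum>i<n. f i) y"
proof -
  obtain M where M: "\<And>k n. n \<ge> M k \<Longrightarrow> f n \<in> F k"
    using assms unfolding filt_lim_def by (metis diff_zero)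
  define N where "N k = (\<Sum>j\<le>k. M j)" for k
  have MN: "M k \<le> N k" for k unfolding N_def by (rule member_le_sum) auto
  have N_mono: "N k \<le> N (Suc k)" for k unfolding N_def by simp
  define x where "x k = (\<Sum>i<N k. f i)" for k
  have tail: "(\<Sum>i<n. f i) - x k \<in> F k" if "n \<ge> N k" for n k
    unfolding x_def sum_lessThan_diff[OF that]
    using M MN by (intro F_sum) (meson atLeastLessThan_iff le_trans)
  have "x (Suc k) - x k \<in> F k" for k
    using tail[OF N_mono] by (simp add: x_def)
  then obtain y where y: "\<And>k. y - x k \<in> F k" using F_complete by blast
  have "(\<Sum>i<n. f i) - y \<in> F k" if "n \<ge> N k" for n k
  proof -
    have "(\<Sum>i<n. f i) - y = ((\<Sum>i<n. f i) - x k) + - (y - x k)" by simp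
    also have "\<dots> \<in> F k" using tail[OF that] y by (intro F_add F_uminus)
    finally show ?thesis .
  qed
  then have "filt_lim F (\<lambda>n. \<Sum>i<n. f i) y" unfolding filt_lim_def by blast
  then show ?thesis by blast
qed

lemma fsum_filt_lim: "filt_lim F f 0 \<Longrightarrow> filt_lim F (\<lambda>n. \<Sum>i<n. f i) (fsum F f)"
  using summable_if_filt_lim_zero fsum_eqI by metis

lemma fsum_add:
  "filt_lim F f 0 \<Longrightarrow> filt_lim F g 0 \<Longrightarrow> fsum F (\<lambda>n. f n + g n) = fsum F f + fsum F g"
  by (rule fsum_eqI) (simp add: sum.distrib filt_lim_add fsum_filt_lim)

lemma fsum_hom:
  assumes h: "additive h" "\<And>n x. x \<in> F n \<Longrightarrow> h x \<in> F n" and f: "filt_lim F f 0"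
  shows "fsum F (\<lambda>n. h (f n)) = h (fsum F f)"
proof (rule fsum_eqI)
  show "filt_lim F (\<lambda>n. \<Sum>i<n. h (f i)) (h (fsum F f))"
    using filt_lim_hom[OF h fsum_filt_lim[OF f]] by (simp add: additive.sum[OF h(1)])
qed

lemma fsum_in_F:
  assumes f: "filt_lim F f 0" and fk: "\<And>n. f n \<in> F k"
  shows "fsum F f \<in> F k"
proof -
  obtain N where N: "(\<Sum>i<N. f i) - fsum F f \<in> F k"
    using fsum_filt_lim[OF f] unfolding filt_lim_def by blast
  have "(\<Sum>i<N. f i) - ((\<Sum>i<N. f i) - fsum F f) \<in> F k"
    by (rule F_diff[OF F_sum N]) (rule fk)
  then show ?thesis by simp
qed

lemma fsum_eq_finite_sum:
  assumes "\<And>n. n \<ge> N \<Longrightarrow> f n = 0"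
  shows "fsum F f = (\<Sum>i<N. f i)"
proof (rule fsum_eqI)
  have "(\<Sum>i<n. f i) - (\<Sum>i<N. f i) = 0" if "n \<ge> N" for n
    unfolding sum_lessThan_diff[OF that] using assms by simp
  then show "filt_lim F (\<lambda>n. \<Sum>i<n. f i) (\<Sum>i<N. f i)"
    unfolding filt_lim_def by (metis F_zero)
qed

lemma cauchy_product_partial_sums:
  assumes a: "\<And>i. a i \<in> F i" and b: "\<And>i. b i \<in> F i"
  shows "(\<Sum>i<n. a i) * (\<Sum>i<n. b i) - (\<Sum>m<n. \<Sum>p\<le>m. a p * b (m - p)) \<in> F n"
proof -
  let ?g = "\<lambda>(i, j). a i * b j"
  let ?S = "{..<n} \<times> {..<n}" and ?T = "{(i, j). i + j < n}"
  have "(\<Sum>i<n. a i) * (\<Sum>i<n. b i) = sum ?g ?S"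
    by (simp add: sum_product sum.cartesian_product)
  also have "\<dots> = sum ?g (?S - ?T) + sum ?g ?T"
    by (rule sum.subset_diff) auto
  also have "sum ?g ?T = (\<Sum>m<n. \<Sum>p\<le>m. a p * b (m - p))"
    by (rule sum.triangle_reindex)
  finally have "(\<Sum>i<n. a i) * (\<Sum>i<n. b i) - (\<Sum>m<n. \<Sum>p\<le>m. a p * b (m - p)) = sum ?g (?S - ?T)"
    by simp
  moreover have "sum ?g (?S - ?T) \<in> F n"
    using F_antimono[OF _ F_mult[OF a b]] by (intro F_sum) auto
  ultimately show ?thesis by simp
qed

lemma fsum_cauchy_product:
  assumes a: "\<And>i. a i \<in> F i" and b: "\<And>i. b i \<in> F i"
  shows "fsum F a * fsum F b = fsum F (\<lambda>n. \<Sum>p\<le>n. a p * b (n - p))"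
proof (rule sym, rule fsum_eqI, unfold filt_lim_def, rule allI)
  fix k
  let ?A = "fsum F a" and ?B = "fsum F b"
  obtain N1 where N1: "\<forall>n\<ge>N1. (\<Sum>i<n. a i) - ?A \<in> F k"
    using fsum_filt_lim[OF filt_lim_zeroI[OF a]] unfolding filt_lim_def by blast
  obtain N2 where N2: "\<forall>n\<ge>N2. (\<Sum>i<n. b i) - ?B \<in> F k"
    using fsum_filt_lim[OF filt_lim_zeroI[OF b]] unfolding filt_lim_def by blast
  have "(\<Sum>m<n. \<Sum>p\<le>m. a p * b (m - p)) - ?A * ?B \<in> F k" if n: "n \<ge> max k (max N1 N2)" for n
  proof -
    let ?An = "\<Sum>i<n. a i" and ?Bn = "\<Sum>i<n. b i" and ?Cn = "\<Sum>m<n. \<Sum>p\<le>m. a p * b (m - p)"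
    have "?Cn - ?A * ?B = - (?An * ?Bn - ?Cn) + (?An - ?A) * ?Bn + ?A * (?Bn - ?B)"
      by (simp add: algebra_simps)
    also have "\<dots> \<in> F k"
      using n N1 N2 F_antimono[OF _ cauchy_product_partial_sums[OF a b, of n], of k]
      by (intro F_add F_uminus F_mult_left F_mult_right) auto
    finally show ?thesis .
  qed
  then show "\<exists>N. \<forall>n\<ge>N. (\<Sum>m<n. \<Sum>p\<le>m. a p * b (m - p)) - ?A * ?B \<in> F k" by blast
qed


lemma npow_in_F: "x \<in> F 1 \<Longrightarrow> npow n x \<in> F n"
proof (induction n x rule: npow.induct)
  case (3 n z)
  then show ?case using F_mult[of z 1 "npow (Suc n) z" "Suc n"] by simp
qed simp_all

text \<open>Since npow 0 x = 0, the constant coefficient of the series is ignored.\<close>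

definition fps_eval :: "'a \<Rightarrow> 'k fps \<Rightarrow> 'a" where
  "fps_eval x f = fsum F (\<lambda>n. sc (fps_nth f n) (npow n x))"

lemma fps_eval_term_in_F: "x \<in> F 1 \<Longrightarrow> sc (fps_nth f n) (npow n x) \<in> F n"
  by (intro F_sc npow_in_F)

lemma fps_eval_terms_filt_lim: "x \<in> F 1 \<Longrightarrow> filt_lim F (\<lambda>n. sc (fps_nth f n) (npow n x)) 0"
  by (intro filt_lim_zeroI fps_eval_term_in_F)

lemma fps_eval_0 [simp]: "fps_eval x 0 = 0"
  unfolding fps_eval_def by (simp add: fsum_eq_finite_sum[where N = 0])

lemma fps_eval_add: "x \<in> F 1 \<Longrightarrow> fps_eval x (f + g) = fps_eval x f + fps_eval x g"
  unfolding fps_eval_def by (simp add: scale_left_distrib fsum_add fps_eval_terms_filt_lim)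

lemma fps_eval_const_mult: "x \<in> F 1 \<Longrightarrow> fps_eval x (fps_const c * f) = sc c (fps_eval x f)"
  unfolding fps_eval_def
  by (simp add: fsum_hom[OF additive_sc F_sc fps_eval_terms_filt_lim, symmetric])

lemma fps_eval_uminus: "x \<in> F 1 \<Longrightarrow> fps_eval x (- f) = - fps_eval x f"
  using fps_eval_const_mult[of x "-1" f] by (simp add: fps_const_neg[symmetric])

lemma fps_eval_diff: "x \<in> F 1 \<Longrightarrow> fps_eval x (f - g) = fps_eval x f - fps_eval x g"
  using fps_eval_add[of x f "- g"] fps_eval_uminus[of x g] by simp

lemma fps_eval_sum: "x \<in> F 1 \<Longrightarrow> fps_eval x (\<Sum>i\<in>A. f i) = (\<Sum>i\<in>A. fps_eval x (f i))"
  by (induction A rule: infinite_finite_induct) (simp_all add: fps_eval_add)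

lemma fps_eval_in_F:
  assumes "x \<in> F 1" and "\<And>i. i < k \<Longrightarrow> fps_nth f i = 0"
  shows "fps_eval x f \<in> F k"
  unfolding fps_eval_def
proof (rule fsum_in_F[OF fps_eval_terms_filt_lim[OF assms(1)]])
  show "sc (fps_nth f n) (npow n x) \<in> F k" for n
    using assms F_antimono[OF _ fps_eval_term_in_F[OF assms(1)], of k n f]
    by (cases "n < k") simp_all
qed

lemma fps_eval_0_left [simp]: "fps_eval 0 f = 0"
  unfolding fps_eval_def by (simp add: fsum_eq_finite_sum[where N = 0])

lemma fps_eval_X [simp]: "fps_eval x fps_X = x"
  unfolding fps_eval_def
  by (simp add: fsum_eq_finite_sum[where N = 2] fps_X_nth numeral_2_eq_2)


lemma fps_eval_1 [simp]: "fps_eval x 1 = 0"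
  unfolding fps_eval_def by (simp add: fsum_eq_finite_sum[where N = 0])

lemma fps_eval_mult:
  assumes x: "x \<in> F 1" and f0: "fps_nth f 0 = 0" and g0: "fps_nth g 0 = 0"
  shows "fps_eval x (f * g) = fps_eval x f * fps_eval x g"
proof -
  have product_term: "sc (fps_nth f p * fps_nth g (n - p)) (npow n x)
      = sc (fps_nth f p) (npow p x) * sc (fps_nth g (n - p)) (npow (n - p) x)" if "p \<le> n" for p n
  proof (cases "p = 0 \<or> p = n")
    case True
    then show ?thesis using f0 g0 by auto
  next
    case False
    then have "npow n x = npow p x * npow (n - p) x"
      using that npow_add[of p "n - p" x] by auto
    then show ?thesis by (simp add: sc_mult_sc)
  qed
  have "fps_eval x f * fps_eval x g = fsum F (\<lambda>n. \<Sum>p\<le>n.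
      sc (fps_nth f p) (npow p x) * sc (fps_nth g (n - p)) (npow (n - p) x))"
    unfolding fps_eval_def by (rule fsum_cauchy_product; rule fps_eval_term_in_F[OF x])
  also have "\<dots> = fps_eval x (f * g)"
    unfolding fps_eval_def fps_mult_nth by (simp add: scale_sum_left atLeast0AtMost product_term)
  finally show ?thesis by simp
qed

lemma fps_eval_power:
  assumes x: "x \<in> F 1" and g0: "fps_nth g 0 = 0"
  shows "fps_eval x (g ^ n) = npow n (fps_eval x g)"
proof (induction n)
  case 0
  show ?case by simp
next
  case (Suc n)
  show ?case
  proof (cases "n = 0")
    case True
    then show ?thesis by simp
  next
    case False
    have "fps_nth (g ^ n) 0 = 0" using g0 False by (simp add: fps_power_zeroth)
    then have "fps_eval x (g * g ^ n) = fps_eval x g * fps_eval x (g ^ n)"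
      by (rule fps_eval_mult[OF x g0])
    then show ?thesis using Suc.IH False by (simp add: npow_Suc)
  qed
qed

lemma fps_eval_compose:
  assumes x: "x \<in> F 1" and g0: "fps_nth g 0 = 0"
  shows "fps_eval x (f oo g) = fps_eval (fps_eval x g) f"
proof -
  let ?y = "fps_eval x g"
  define h where "h N = (\<Sum>i<N. fps_const (fps_nth f i) * g ^ i)" for N
  have partial_sum: "(\<Sum>i<N. sc (fps_nth f i) (npow i ?y)) = fps_eval x (h N)" for N
    unfolding h_def
    by (simp add: fps_eval_sum[OF x] fps_eval_const_mult[OF x] fps_eval_power[OF x g0])
  have "(\<Sum>i<N. sc (fps_nth f i) (npow i ?y)) - fps_eval x (f oo g) \<in> F k" if "k \<le> N" for k N
  proof -
    have "fps_eval x (h N - (f oo g)) \<in> F N"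
      using fps_compose_eq_truncated_sum[OF g0] by (intro fps_eval_in_F[OF x]) (simp add: h_def)
    then show ?thesis
      using F_antimono[OF that] by (simp add: partial_sum fps_eval_diff[OF x])
  qed
  then have "filt_lim F (\<lambda>N. \<Sum>i<N. sc (fps_nth f i) (npow i ?y)) (fps_eval x (f oo g))"
    unfolding filt_lim_def by blast
  then have "fps_eval ?y f = fps_eval x (f oo g)"
    unfolding fps_eval_def[of ?y] by (rule fsum_eqI)
  then show ?thesis ..
qed

lemma fps_eval_hom:
  assumes h: "additive h" "\<And>n x. x \<in> F n \<Longrightarrow> h x \<in> F n"
    and h_sc: "\<And>a x. h (sc a x) = sc a (h x)" and h_mult: "\<And>x y. h (x * y) = h x * h y"
    and x: "x \<in> F 1"
  shows "h (fps_eval x f) = fps_eval (h x) f"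
  unfolding fps_eval_def
  by (simp add: fsum_hom[OF h fps_eval_terms_filt_lim[OF x], symmetric] h_sc
      npow_hom[OF h_mult additive.zero[OF h(1)]])


lemma fps_eval_circ_mult:
  assumes "x \<in> F 1" and "fps_nth f 0 = 0" and "fps_nth g 0 = 0"
  shows "fps_eval x (circ_mult f g) = circ_mult (fps_eval x f) (fps_eval x g)"
  using assms by (simp add: circ_mult_def fps_eval_add fps_eval_mult)

definition expm1 :: "'a \<Rightarrow> 'a" where
  "expm1 x = fps_eval x (fps_exp 1 - 1)"

lemma log1p_eq_fps_eval: "log1p sc F z = fps_eval z (fps_ln 1)"
  unfolding log1p_def fps_eval_def
proof (rule arg_cong[where f = "fsum F"], rule ext)
  fix k
  show "(if k = 0 then 0 else sc ((-1) ^ (k + 1) / of_nat k) (npow k z))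
      = sc (fps_nth (fps_ln 1) k) (npow k z)"
    by (cases k) (simp_all add: fps_ln_nth)
qed

lemma expm1_0 [simp]: "expm1 0 = 0"
  by (simp add: expm1_def)

lemma expm1_in_F1: "x \<in> F 1 \<Longrightarrow> expm1 x \<in> F 1"
  unfolding expm1_def by (rule fps_eval_in_F) simp_all

lemma log1p_expm1: "x \<in> F 1 \<Longrightarrow> log1p sc F (expm1 x) = x"
  using fps_eval_compose[of x "fps_exp 1 - 1" "fps_ln 1"]
    fps_inv_fps_exp_compose(1)[of "1::'k", folded fps_ln_fps_exp_inv[OF one_neq_zero]]
  by (simp add: expm1_def log1p_eq_fps_eval)

lemma expm1_log1p: "z \<in> F 1 \<Longrightarrow> expm1 (log1p sc F z) = z"
  using fps_eval_compose[of z "fps_ln 1" "fps_exp 1 - 1"]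
    fps_inv_fps_exp_compose(2)[of "1::'k", folded fps_ln_fps_exp_inv[OF one_neq_zero]]
  by (simp add: expm1_def log1p_eq_fps_eval)

lemma expm1_inject: "x \<in> F 1 \<Longrightarrow> y \<in> F 1 \<Longrightarrow> expm1 x = expm1 y \<Longrightarrow> x = y"
  by (metis log1p_expm1)

lemma circ_mult_expm1_uminus: 
  assumes x: "x \<in> F 1"
  shows "circ_mult (expm1 (- x)) (expm1 x) = 0"
proof -
  have "expm1 (- x) = fps_eval x ((fps_exp 1 - 1) oo - fps_X)"
    unfolding expm1_def using x by (simp add: fps_eval_compose fps_eval_uminus)
  also have "\<dots> = fps_eval x (fps_exp (-1) - 1)"
    by (simp add: fps_compose_sub_distrib)
  finally have "circ_mult (expm1 (- x)) (expm1 x)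
      = fps_eval x (circ_mult (fps_exp (-1) - 1) (fps_exp 1 - 1))"
    unfolding expm1_def using x by (simp add: fps_eval_circ_mult)
  then show ?thesis by (simp add: circ_mult_fps_exp_neg)
qed

lemma expm1_hom:
  assumes "additive h" "\<And>n x. x \<in> F n \<Longrightarrow> h x \<in> F n"
    and "\<And>a x. h (sc a x) = sc a (h x)" and "\<And>x y. h (x * y) = h x * h y"
    and "x \<in> F 1"
  shows "h (expm1 x) = expm1 (h x)"
  unfolding expm1_def using assms by (rule fps_eval_hom)


lemma exp_prod_m1_eq_circ_mult:
  assumes x: "x \<in> F 1" and y: "y \<in> F 1"
  shows "exp_prod_m1 sc F x y = circ_mult (expm1 x) (expm1 y)"
proof -
  define a where "a p = sc (fps_nth (fps_exp 1 - 1 :: 'k fps) p) (npow p x)" for p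
  define b where "b p = sc (fps_nth (fps_exp 1 - 1 :: 'k fps) p) (npow p y)" for p
  have a: "a p \<in> F p" and b: "b p \<in> F p" for p
    by (simp_all only: a_def b_def fps_eval_term_in_F x y)
  have ab: "(\<Sum>q\<le>n. a q * b (n - q)) \<in> F n" for n
    using F_mult[OF a b] by (intro F_sum) (metis atMost_iff le_add_diff_inverse)
  have monomial: "sc (1 / (of_nat (fact p) * of_nat (fact (n - p)))) (mon p (n - p) x y)
      = (if p = 0 then b n else 0) + (if p = n then a n else 0) + a p * b (n - p)"
    if "1 \<le> n" "p \<le> n" for n p
    using that by (auto simp: a_def b_def mon_def sc_mult_sc mult.commute)
  have degree: "(if n = 0 then 0 else
        \<Sum>p\<le>n. sc (1 / (of_nat (fact p) * of_nat (fact (n - p)))) (mon p (n - p) x y))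
      = (a n + b n) + (\<Sum>p\<le>n. a p * b (n - p))" for n
  proof (cases "n = 0")
    case True
    then show ?thesis by (simp add: a_def b_def)
  next
    case False
    then have "(\<Sum>p\<le>n. sc (1 / (of_nat (fact p) * of_nat (fact (n - p)))) (mon p (n - p) x y))
        = (\<Sum>p\<le>n. (if p = 0 then b n else 0) + (if p = n then a n else 0) + a p * b (n - p))"
      by (intro sum.cong refl monomial) auto
    then show ?thesis using False by (simp add: sum.distrib)
  qed
  have "exp_prod_m1 sc F x y = fsum F (\<lambda>n. (a n + b n) + (\<Sum>p\<le>n. a p * b (n - p)))"
    unfolding exp_prod_m1_def degree ..
  also have "\<dots> = fsum F a + fsum F b + fsum F a * fsum F b"
    using a b ab
    by (simp add: fsum_add F_add filt_lim_zeroI fsum_cauchy_product)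
  also have "\<dots> = circ_mult (expm1 x) (expm1 y)"
    unfolding circ_mult_def expm1_def fps_eval_def a_def [abs_def] b_def [abs_def] ..
  finally show ?thesis .
qed

lemma BCH_eq_log1p_circ_mult:
  "x \<in> F 1 \<Longrightarrow> y \<in> F 1 \<Longrightarrow> BCH sc F x y = log1p sc F (circ_mult (expm1 x) (expm1 y)) - x - y"
  by (simp add: BCH_def exp_prod_m1_eq_circ_mult)

end

theorem lemma2p7:
  fixes sc :: "'k::field_char_0 \<Rightarrow> 'a::ring \<Rightarrow> 'a"
    and F :: "nat \<Rightarrow> 'a set"
    and P :: "'a \<Rightarrow> 'a"
    and chi :: "'a \<Rightarrow> 'a"
  assumes A: "complete_filtered_algebra sc F"
    and P_add: "\<forall>x y. P (x + y) = P x + P y"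
    and P_scale: "\<forall>a x. P (sc a x) = sc a (P x)"
    and P_filt: "\<forall>n. \<forall>x\<in>F n. P x \<in> F n"
    and P_mult: "\<forall>x y. P (x * y) = P x * P y"
    and P_idem: "\<forall>x. P (P x) = P x"
    and chi_maps: "\<forall>a\<in>F 1. chi a \<in> F 1"
    and chi_rec: "\<forall>a\<in>F 1. chi a = a - BCH sc F (P (chi a)) (chi a - P (chi a))"
  shows "\<forall>u\<in>F 1. chi u = u + BCH sc F (- P u) u"
proof
  interpret filtered_alg sc F by (rule filtered_alg.intro) (rule A)
  have P_additive: "additive P" using P_add by unfold_locales blast
  have P_expm1: "P (expm1 x) = expm1 (P x)" if "x \<in> F 1" for x
    using P_additive P_filt P_scale P_mult that by (intro expm1_hom) blast+
  have P_circ_mult: "P (circ_mult a b) = circ_mult (P a) (P b)" for a b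
    using P_add P_mult by (simp add: circ_mult_def)
  fix u assume u: "u \<in> F 1"
  define p q where "p = P (chi u)" and "q = chi u - P (chi u)"
  have p: "p \<in> F 1" and q: "q \<in> F 1" and Pu_in_F1: "P u \<in> F 1"
    using chi_maps u P_filt unfolding p_def q_def by (auto intro: F_diff)
  have Pp: "P p = p" and Pq: "P q = 0"
    using P_idem additive.diff[OF P_additive] unfolding p_def q_def by simp_all
  have "p + q = u - BCH sc F p q"
    using chi_rec u unfolding p_def q_def by simp
  then have "u = log1p sc F (circ_mult (expm1 p) (expm1 q))"
    unfolding BCH_eq_log1p_circ_mult[OF p q] by (simp add: algebra_simps)
  then have expm1_u: "expm1 u = circ_mult (expm1 p) (expm1 q)"
    using expm1_log1p[OF circ_mult_in_F[OF expm1_in_F1[OF p] expm1_in_F1[OF q]]] by simp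
  have "expm1 (P u) = expm1 p"
    using P_expm1[OF u] P_expm1[OF p] P_expm1[OF q] by (simp add: expm1_u P_circ_mult Pp Pq)
  then have Pu_eq: "P u = p" by (rule expm1_inject[OF Pu_in_F1 p])
  have "circ_mult (expm1 (- P u)) (expm1 u) = expm1 q"
    by (simp add: expm1_u Pu_eq circ_mult_expm1_uminus[OF p] flip: circ_mult_assoc)
  then show "chi u = u + BCH sc F (- P u) u"
    using BCH_eq_log1p_circ_mult[OF F_uminus[OF Pu_in_F1] u] log1p_expm1[OF q] Pu_eq
    by (simp add: p_def q_def)
qed

end
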